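(* Let $f:\mathbb R\to(-\infty,\infty]$ be convex, finite for some $\theta>0$ and infinite for all $\theta<0$. Let $\Gamma=\Gamma(f^* )$, $\vartheta=\vartheta(f)$ and $\underline\psi=\inf\Phi_f$. Then $f^\natural\equiv-\infty$ and $\vartheta=-\infty$ when $\Gamma=-\infty$. Otherwise $\vartheta\ge0$ and $f^\natural(\theta)=f(\theta)$ for $0\le\theta<\vartheta$. When $0\le\vartheta<\infty$, $f^\natural(\theta)=\theta\Gamma<f(\theta)$ for $\theta>\vartheta$, and \[f^\natural(\vartheta)=\begin{cases} f(\vartheta)\ge\mathrm{cl}\,f(\vartheta)=\vartheta\Gamma & \text{when }\vartheta=\underline\psi,\\ \vartheta\Gamma=\mathrm{cl}\,f(\vartheta)\le f(\vartheta)&\text{when }\vartheta>\underline\psi.\end{cases}\] In all cases \[\Gamma=\inf_{\theta>0}\frac{f^\natural(\theta)}{\theta}=\inf_{\theta>0}\frac{f(\theta)}{\theta}.\] When $0\le\vartheta<\infty$, $\Gamma=f(\vartheta)/\vartheta$ provided $f$ is lower semicontinuous at $\vartheta$, and when $\vartheta=\infty$, $\Gamma=\lim_{\theta\uparrow\infty}f(\theta)/\theta$.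
   Context: $\Phi_f=\{\theta:f(\theta)<\infty\}$. $f^*(x)=\sup_\theta\{\theta x-f(\theta)\}$; $\Gamma(g)=\inf\{a:g(a)>0\}$. $f^\natural$ is the maximal convex function with $f^\natural\le f$ and $f^\natural(\theta)/\theta$ decreasing in $\theta\in(0,\infty)$ (identically $-\infty$ if no function satisfies these constraints); $\vartheta(f)=\sup\{\theta:f(\theta)=f^\natural(\theta)\}$ (possibly $+\infty$, and $-\infty$ if the set is empty). $\mathrm{cl}\,f$ is the closure of $f$: the lower semicontinuous convex function obtained by adjusting the values of $f$ at the end-points of the interval $\Phi_f$ so as to make it lower semicontinuous. *)

theory Defs
  imports "HOL-Analysis.Analysis"
begin

text \<open>Extended-real valued functions on the real line. Convexity for functions
  never taking the value minus infinity (values in (-inf, +inf]).\<close>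
definition econvex :: "(real \<Rightarrow> ereal) \<Rightarrow> bool" where
  "econvex g \<longleftrightarrow> (\<forall>x y t. 0 < t \<and> t < 1 \<longrightarrow>
      g ((1 - t) * x + t * y) \<le> ereal (1 - t) * g x + ereal t * g y)"

definition dom_f :: "(real \<Rightarrow> ereal) \<Rightarrow> real set" where
  "dom_f f = {\<theta>. f \<theta> < \<infinity>}"

definition fconj :: "(real \<Rightarrow> ereal) \<Rightarrow> real \<Rightarrow> ereal" where
  "fconj f x = (SUP \<theta>. ereal (\<theta> * x) - f \<theta>)"

text \<open>Gamma(g) = inf {a. g a > 0} (an extended real; inf of the empty set is +inf).\<close>
definition Gam :: "(real \<Rightarrow> ereal) \<Rightarrow> ereal" where
  "Gam g = Inf (ereal ` {a. g a > 0})"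

definition nat_cands :: "(real \<Rightarrow> ereal) \<Rightarrow> (real \<Rightarrow> ereal) set" where
  "nat_cands f = {g. econvex g \<and> (\<forall>\<theta>. g \<theta> \<noteq> -\<infinity>) \<and> (\<forall>\<theta>. g \<theta> \<le> f \<theta>) \<and>
      (\<forall>\<theta>1 \<theta>2. 0 < \<theta>1 \<and> \<theta>1 \<le> \<theta>2 \<longrightarrow> g \<theta>2 / ereal \<theta>2 \<le> g \<theta>1 / ereal \<theta>1)}"

definition fnat :: "(real \<Rightarrow> ereal) \<Rightarrow> real \<Rightarrow> ereal" where
  "fnat f = (if \<exists>g\<in>nat_cands f. \<forall>h\<in>nat_cands f. h \<le> g
             then (THE g. g \<in> nat_cands f \<and> (\<forall>h\<in>nat_cands f. h \<le> g))
             else (\<lambda>_. -\<infinity>))"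

text \<open>vartheta(f) = sup {theta. f theta = f-natural theta} (sup of empty set is -inf).\<close>
definition vtheta :: "(real \<Rightarrow> ereal) \<Rightarrow> ereal" where
  "vtheta f = Sup (ereal ` {\<theta>. f \<theta> = fnat f \<theta>})"

text \<open>Closure of f: its lower semicontinuous hull, cl f x = liminf_{y -> x} f y
  (including y = x).  For a convex function on the line this is exactly f with
  the values at the end-points of Phi_f adjusted to make it lsc.\<close>
definition clf :: "(real \<Rightarrow> ereal) \<Rightarrow> real \<Rightarrow> ereal" where
  "clf f x = Liminf (nhds x) f"

definition lsc_at :: "(real \<Rightarrow> ereal) \<Rightarrow> real \<Rightarrow> bool" where
  "lsc_at f x \<longleftrightarrow> f x \<le> Liminf (at x) f"

end

theory Submission
  imports Defs
begin

text \<open>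
  Write \<open>r(\<theta>) = f(\<theta>)/\<theta>\<close> and \<open>m(\<theta>) = inf {r(s) | 0 < s \<le> \<theta>}\<close>. Every admissible
  minorant \<open>g\<close> satisfies \<open>g(\<theta>)/\<theta> \<le> m(\<theta>)\<close>, so it lies below the function equal to \<open>f\<close> on
  \<open>(-\<infinity>, 0]\<close> and to \<open>\<theta> m(\<theta>)\<close> on \<open>(0, \<infinity>)\<close>. Computing the conjugate shows
  \<open>\<Gamma> = inf {r(\<theta>) | \<theta> > 0}\<close>. If \<open>\<Gamma> = -\<infinity>\<close> nothing is admissible, because the ratio of a convex
  function that is finite somewhere on \<open>(0, \<infinity>)\<close> and has nonincreasing ratio is bounded below.
  Otherwise \<open>\<theta> m(\<theta>)\<close> is itself convex, hence it is \<open>f\<^sup>\<natural>\<close>. It agrees with \<open>f\<close> exactly at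
  the points where \<open>r\<close> attains its running minimum; by convexity these form an initial
  segment of \<open>(0, \<infinity>)\<close> with end point \<open>\<vartheta>\<close>, and beyond it \<open>m = \<Gamma>\<close>. Since \<open>f \<ge> \<theta>\<Gamma>\<close>
  everywhere while \<open>r\<close> comes arbitrarily close to \<open>\<Gamma>\<close> next to \<open>\<vartheta>\<close>, the closure of \<open>f\<close>
  at \<open>\<vartheta>\<close> is \<open>\<vartheta>\<Gamma>\<close>. When \<open>\<vartheta> > \<psi>\<close>, convexity through a finite point left of \<open>\<vartheta>\<close>
  bounds \<open>f(\<vartheta>)\<close> by the values just to its right, which forces \<open>m(\<vartheta>) = \<Gamma>\<close>.
\<close>

lemma between_convex_combination:
  fixes x y z :: real
  assumes "x < y" "y < z"
  defines "t \<equiv> (y - x) / (z - x)"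
  shows "0 < t" "t < 1" "(1 - t) * x + t * z = y"
proof -
  show "0 < t" "t < 1"
    using assms by (auto simp: field_simps)
  have "t * (z - x) = y - x"
    using assms by simp
  then show "(1 - t) * x + t * z = y"
    by (simp add: algebra_simps)
qed

lemma interpolation_weight_mono:
  fixes s\<^sub>1 x z s\<^sub>2 y :: real
  assumes "0 < s\<^sub>1" "s\<^sub>1 \<le> x" "x < z" "z < s\<^sub>2" "s\<^sub>2 \<le> y"
  shows "(z - x) / (y - x) * y \<le> (z - s\<^sub>1) / (s\<^sub>2 - s\<^sub>1) * s\<^sub>2"
proof -
  have "(s\<^sub>2 - x) * ((z - s\<^sub>1) * s\<^sub>2 * (y - x) - (z - x) * y * (s\<^sub>2 - s\<^sub>1))
      = s\<^sub>2 * (x - s\<^sub>1) * (s\<^sub>2 - z) * (y - x) + (z - x) * x * (y - s\<^sub>2) * (s\<^sub>2 - s\<^sub>1)"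
    by (simp add: algebra_simps)
  also have "\<dots> \<ge> 0"
    using assms by (intro add_nonneg_nonneg mult_nonneg_nonneg) auto
  finally have "(z - x) * y * (s\<^sub>2 - s\<^sub>1) \<le> (z - s\<^sub>1) * s\<^sub>2 * (y - x)"
    using assms by (simp add: zero_le_mult_iff)
  then show ?thesis
    using assms by (simp add: field_simps)
qed

lemma ereal_le_affine_of_INF:
  fixes c :: ereal
  assumes inf: "(INF s\<in>S. \<phi> s) = ereal M" and "0 \<le> B"
    and le: "\<And>s \<rho>. s \<in> S \<Longrightarrow> \<phi> s = ereal \<rho> \<Longrightarrow> c \<le> ereal (A + B * \<rho>)"
  shows "c \<le> ereal (A + B * M)"
proof (rule ereal_le_epsilon2)
  fix \<epsilon> :: real
  assume "0 < \<epsilon>"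
  define \<delta> where "\<delta> = \<epsilon> / (B + 1)"
  have "0 < \<delta>" "B * \<delta> \<le> \<epsilon>"
    using \<open>0 < \<epsilon>\<close> \<open>0 \<le> B\<close> by (auto simp: \<delta>_def field_simps)
  then have "(INF s\<in>S. \<phi> s) < ereal (M + \<delta>)"
    using inf by simp
  then obtain s where s: "s \<in> S" "\<phi> s < ereal (M + \<delta>)"
    by (auto simp: INF_less_iff)
  moreover have "ereal M \<le> \<phi> s"
    using INF_lower[OF s(1), of \<phi>] inf by simp
  ultimately obtain \<rho> where \<rho>: "\<phi> s = ereal \<rho>" "\<rho> < M + \<delta>"
    by (cases "\<phi> s") auto
  have "c \<le> ereal (A + B * \<rho>)"
    using le[OF s(1) \<rho>(1)] .
  also have "B * \<rho> \<le> B * M + \<epsilon>"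
    using \<rho>(2) \<open>0 \<le> B\<close> \<open>B * \<delta> \<le> \<epsilon>\<close> mult_left_mono[of \<rho> "M + \<delta>" B]
    by (simp add: distrib_left)
  then have "ereal (A + B * \<rho>) \<le> ereal (A + B * M) + ereal \<epsilon>"
    by simp
  finally show "c \<le> ereal (A + B * M) + ereal \<epsilon>" .
qed

lemma Liminf_le_Limsup_frequently:
  fixes f g :: "'a \<Rightarrow> 'b::complete_linorder"
  assumes "\<exists>\<^sub>F x in F. f x \<le> g x"
  shows "Liminf F f \<le> Limsup F g"
  unfolding Liminf_def Limsup_def
proof (intro SUP_least INF_greatest)
  fix P Q
  assume "P \<in> {P. eventually P F}" "Q \<in> {Q. eventually Q F}"
  then have "\<exists>\<^sub>F x in F. (P x \<and> Q x) \<and> f x \<le> g x"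
    using assms by (intro frequently_eventually_conj) (auto intro: eventually_conj)
  then obtain x where "P x" "Q x" "f x \<le> g x"
    by (auto dest: frequently_ex)
  have "(INF x\<in>Collect P. f x) \<le> f x"
    using \<open>P x\<close> by (intro INF_lower) simp
  also have "\<dots> \<le> g x" by fact
  also have "\<dots> \<le> (SUP x\<in>Collect Q. g x)"
    using \<open>Q x\<close> by (intro SUP_upper) simp
  finally show "(INF x\<in>Collect P. f x) \<le> (SUP x\<in>Collect Q. g x)" .
qed

lemma Liminf_le_lim_frequently:
  fixes f g :: "'a \<Rightarrow> 'b::{complete_linorder, linorder_topology}"
  assumes "\<exists>\<^sub>F x in F. f x \<le> g x" and "(g \<longlongrightarrow> l) F"
  shows "Liminf F f \<le> l"
proof -
  have "F \<noteq> bot"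
    using assms(1) by (auto simp: frequently_def)
  then show ?thesis
    using Liminf_le_Limsup_frequently[OF assms(1)] lim_imp_Limsup[OF _ assms(2)] by simp
qed

lemma frequently_at_iff_at_left_or_at_right:
  "(\<exists>\<^sub>F x in at (v::real). P x) \<longleftrightarrow> (\<exists>\<^sub>F x in at_left v. P x) \<or> (\<exists>\<^sub>F x in at_right v. P x)"
  by (simp add: frequently_def at_eq_sup_left_right eventually_sup)

section \<open>Convex functions with values in \<open>(-\<infinity>, \<infinity>]\<close>\<close>

lemma econvex_real:
  assumes "econvex g" "0 < t" "t < 1" "g x = ereal a" "g y = ereal b"
  shows "g ((1 - t) * x + t * y) \<le> ereal ((1 - t) * a + t * b)"
  using assms unfolding econvex_def by (metis plus_ereal.simps(1) times_ereal.simps(1))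

lemma econvex_finite_between:
  assumes "econvex g" "x < y" "y < z" "g x < \<infinity>" "g z < \<infinity>"
  shows "g y < \<infinity>"
proof -
  note t = between_convex_combination[OF assms(2,3)]
  have "g y \<le> ereal (1 - (y - x) / (z - x)) * g x + ereal ((y - x) / (z - x)) * g z"
    using assms(1) t unfolding econvex_def by metis
  also have "\<dots> < \<infinity>"
    using assms(4,5) t(1,2) by (simp add: less_top[symmetric])
  finally show ?thesis .
qed

lemma econvex_above_secant:
  assumes conv: "econvex g" and nominf: "\<forall>\<theta>. g \<theta> \<noteq> -\<infinity>"
    and "x < y" "y < z" and ga: "g x = ereal a" and gb: "g y = ereal b"
  shows "ereal (b + (b - a) / (y - x) * (z - y)) \<le> g z"
proof (cases "g z")
  case (real c)
  define t where "t = (y - x) / (z - x)"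
  note t = between_convex_combination[OF assms(3,4), folded t_def]
  have "t * (z - x) = y - x"
    using assms(3,4) by (simp add: t_def)
  have "b \<le> (1 - t) * a + t * c"
    using econvex_real[OF conv t(1,2) ga real] gb t(3) by simp
  then have "b * (z - x) \<le> ((1 - t) * a + t * c) * (z - x)"
    using assms(3,4) by (intro mult_right_mono) auto
  also have "\<dots> = a * (z - x) + (c - a) * (t * (z - x))"
    by (simp add: algebra_simps)
  also have "\<dots> = (z - y) * a + (y - x) * c"
    unfolding \<open>t * (z - x) = y - x\<close> by (simp add: algebra_simps)
  finally have "b * (z - x) \<le> (z - y) * a + (y - x) * c" .
  then have "b * (y - x) + (b - a) * (z - y) \<le> c * (y - x)"
    by (simp add: algebra_simps)
  then show ?thesis
    using real assms(3) by (simp add: field_simps)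
qed (use nominf in auto)

lemma econvex_ratio_bounded_below:
  assumes conv: "econvex g" and nominf: "\<forall>\<theta>. g \<theta> \<noteq> -\<infinity>"
    and "0 < \<theta>\<^sub>1" "g \<theta>\<^sub>1 < \<infinity>"
    and antitone: "\<forall>\<theta>\<^sub>1 \<theta>\<^sub>2. 0 < \<theta>\<^sub>1 \<and> \<theta>\<^sub>1 \<le> \<theta>\<^sub>2 \<longrightarrow> g \<theta>\<^sub>2 / ereal \<theta>\<^sub>2 \<le> g \<theta>\<^sub>1 / ereal \<theta>\<^sub>1"
  shows "\<exists>K. \<forall>\<theta>>0. ereal K \<le> g \<theta> / ereal \<theta>"
proof -
  define q where "q = 2 * \<theta>\<^sub>1"
  obtain a where a: "g \<theta>\<^sub>1 = ereal a"
    using assms(3,4) nominf by (cases "g \<theta>\<^sub>1") auto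
  have "g q / ereal q \<le> g \<theta>\<^sub>1 / ereal \<theta>\<^sub>1"
    using antitone assms(3) by (simp add: q_def)
  then have "g q / ereal q \<le> ereal (a / \<theta>\<^sub>1)"
    using a assms(3) by simp
  then have "g q \<noteq> \<infinity>"
    using assms(3) by (auto simp: q_def)
  then obtain b where b: "g q = ereal b"
    using nominf by (cases "g q") auto
  define k where "k = (b - a) / \<theta>\<^sub>1"
  define K where "K = k - \<bar>b - k * q\<bar> / q"
  have "ereal K \<le> g \<theta> / ereal \<theta>" if "0 < \<theta>" for \<theta>
  proof -
    define Y where "Y = max \<theta> q + 1"
    have Y: "q < Y" "\<theta> \<le> Y" "0 < Y" "0 < q"
      using assms(3) by (auto simp: Y_def q_def)
    have "ereal (b + k * (Y - q)) \<le> g Y"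
      using econvex_above_secant[OF conv nominf _ _ a b, of Y] Y assms(3)
      by (simp add: k_def q_def)
    then have "ereal ((b + k * (Y - q)) / Y) \<le> g Y / ereal Y"
      using ereal_divide_right_mono[of _ _ "ereal Y"] Y by fastforce
    moreover have "K \<le> (b + k * (Y - q)) / Y"
    proof -
      have "\<bar>b - k * q\<bar> / Y \<le> \<bar>b - k * q\<bar> / q"
        using Y by (intro divide_left_mono) auto
      moreover have "- \<bar>b - k * q\<bar> / Y \<le> (b - k * q) / Y"
        using Y by (intro divide_right_mono) auto
      moreover have "(b + k * (Y - q)) / Y = k + (b - k * q) / Y"
        using Y by (simp add: field_simps)
      ultimately show ?thesis
        by (simp add: K_def)
    qed
    moreover have "g Y / ereal Y \<le> g \<theta> / ereal \<theta>"
      using antitone that Y by blast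
    ultimately show ?thesis
      by (meson ereal_less_eq(3) order_trans)
  qed
  then show ?thesis by blast
qed

lemma econvex_ratio_INF_minf:
  assumes conv: "econvex g" and nominf: "\<forall>\<theta>. g \<theta> \<noteq> -\<infinity>"
    and "g 0 < 0" "0 < \<theta>\<^sub>1" "g \<theta>\<^sub>1 < \<infinity>"
  shows "(INF \<theta>\<in>{0<..}. g \<theta> / ereal \<theta>) = -\<infinity>"
proof -
  obtain c where c: "g 0 = ereal c" and "c < 0"
    using assms(3) nominf by (cases "g 0") auto
  obtain d where d: "g \<theta>\<^sub>1 = ereal d"
    using assms(5) nominf by (cases "g \<theta>\<^sub>1") auto
  have bound: "g (t * \<theta>\<^sub>1) / ereal (t * \<theta>\<^sub>1) \<le> ereal ((d - c) / \<theta>\<^sub>1 + c / \<theta>\<^sub>1 * inverse t)"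
    if "0 < t" "t < 1" for t
  proof -
    have "g (t * \<theta>\<^sub>1) \<le> ereal ((1 - t) * c + t * d)"
      using econvex_real[OF conv that c d] by simp
    then have "g (t * \<theta>\<^sub>1) / ereal (t * \<theta>\<^sub>1) \<le> ereal (((1 - t) * c + t * d) / (t * \<theta>\<^sub>1))"
      using ereal_divide_right_mono[of _ _ "ereal (t * \<theta>\<^sub>1)"] that assms(4) by fastforce
    also have "((1 - t) * c + t * d) / (t * \<theta>\<^sub>1) = (d - c) / \<theta>\<^sub>1 + c / \<theta>\<^sub>1 * inverse t"
      using that assms(4) by (simp add: field_simps)
    finally show ?thesis .
  qed
  have "LIM t at_right 0. c / \<theta>\<^sub>1 * inverse t :> at_bot"
    using \<open>c < 0\<close> assms(4)
    by (intro filterlim_tendsto_neg_mult_at_bot[OF tendsto_const _ filterlim_inverse_at_top_right])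
       (simp add: divide_neg_pos)
  then have lim: "LIM t at_right 0. (d - c) / \<theta>\<^sub>1 + c / \<theta>\<^sub>1 * inverse t :> at_bot"
    by (subst filterlim_tendsto_add_at_bot_iff[OF tendsto_const])
  show ?thesis
  proof (rule ereal_bot)
    fix B
    have "\<forall>\<^sub>F t in at_right 0. (d - c) / \<theta>\<^sub>1 + c / \<theta>\<^sub>1 * inverse t \<le> B \<and> 0 < t \<and> t < 1"
    proof (intro eventually_conj)
      show "\<forall>\<^sub>F t in at_right 0. (d - c) / \<theta>\<^sub>1 + c / \<theta>\<^sub>1 * inverse t \<le> B"
        using lim by (simp add: filterlim_at_bot)
      show "\<forall>\<^sub>F t in at_right 0. 0 < (t::real)"
        by (rule eventually_at_right_less)
      show "\<forall>\<^sub>F t in at_right 0. t < (1::real)"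
        unfolding eventually_at_right_field by (intro exI[of _ 1]) auto
    qed
    then obtain t where t: "(d - c) / \<theta>\<^sub>1 + c / \<theta>\<^sub>1 * inverse t \<le> B" "0 < t" "t < 1"
      using eventually_happens'[of "at_right (0::real)"] by auto
    have "(INF \<theta>\<in>{0<..}. g \<theta> / ereal \<theta>) \<le> g (t * \<theta>\<^sub>1) / ereal (t * \<theta>\<^sub>1)"
      using t assms(4) by (intro INF_lower) auto
    also have "\<dots> \<le> ereal B"
      using bound[OF t(2,3)] t(1) by (meson ereal_less_eq(3) order_trans)
    finally show "(INF \<theta>\<in>{0<..}. g \<theta> / ereal \<theta>) \<le> ereal B" .
  qed
qed

lemma econvex_le_of_frequently_at_right:
  assumes conv: "econvex g" and "p < v" "g p = ereal a"
    and lim: "(\<phi> \<longlongrightarrow> L) (at_right v)"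
    and freq: "\<exists>\<^sub>F s in at_right v. g s \<le> ereal (\<phi> s)"
  shows "g v \<le> ereal L"
proof -
  define w where "w s = (s - v) / (s - p)" for s
  have "g v \<le> ereal ((1 - w s) * \<phi> s + w s * a)" if "v < s" "g s \<le> ereal (\<phi> s)" for s
  proof -
    have w: "0 < w s" "w s < 1"
      using that(1) \<open>p < v\<close> by (auto simp: w_def field_simps)
    have "w s * (s - p) = s - v"
      using that(1) \<open>p < v\<close> by (simp add: w_def)
    then have "(1 - w s) * s + w s * p = v"
      by (simp add: algebra_simps)
    then have "g v \<le> ereal (1 - w s) * g s + ereal (w s) * g p"
      using conv w unfolding econvex_def by metis
    also have "\<dots> \<le> ereal (1 - w s) * ereal (\<phi> s) + ereal (w s) * g p"
      using w that(2) by (intro add_right_mono ereal_mult_left_mono) auto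
    finally show ?thesis
      using \<open>g p = ereal a\<close> by simp
  qed
  then have "\<exists>\<^sub>F s in at_right v. g v \<le> ereal ((1 - w s) * \<phi> s + w s * a)"
    using frequently_eventually_conj[OF freq eventually_at_right_less[of v]]
    by (auto elim: frequently_elim1)
  moreover have "((\<lambda>s. ereal ((1 - w s) * \<phi> s + w s * a)) \<longlongrightarrow> ereal L) (at_right v)"
  proof -
    have "(w \<longlongrightarrow> 0) (at_right v)"
      unfolding w_def using \<open>p < v\<close>
      by (auto intro!: tendsto_eq_intros tendsto_ident_at)
    then show ?thesis
      by (auto intro!: tendsto_eq_intros lim)
  qed
  ultimately have "Liminf (at_right v) (\<lambda>_. g v) \<le> ereal L"
    by (rule Liminf_le_lim_frequently)
  then show ?thesis
    by (simp add: Liminf_const)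
qed

lemma fnat_eq_greatest:
  assumes "g \<in> nat_cands f" "\<And>h. h \<in> nat_cands f \<Longrightarrow> h \<le> g"
  shows "fnat f = g"
proof -
  have "(THE g. g \<in> nat_cands f \<and> (\<forall>h\<in>nat_cands f. h \<le> g)) = g"
    using assms by (intro the_equality) (auto intro: antisym)
  then show ?thesis
    using assms unfolding fnat_def by auto
qed

lemma clf_le: "clf g x \<le> g x"
  unfolding clf_def
  by (rule Liminf_least) (auto intro: INF_lower eventually_nhds_x_imp_x)

lemma clf_le_Liminf_at: "clf g x \<le> Liminf (at x) g"
  unfolding clf_def Liminf_def
  by (rule SUP_subset_mono) (auto simp: eventually_at_filter elim: eventually_mono)

lemma clf_ge_continuous_minorant:
  assumes "\<And>y. \<phi> y \<le> g y" and "(\<phi> \<longlongrightarrow> \<phi> x) (nhds x)"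
  shows "\<phi> x \<le> clf g x"
proof -
  have "\<phi> x = Liminf (nhds x) \<phi>"
    using lim_imp_Liminf[OF _ assms(2)] by simp
  also have "\<dots> \<le> clf g x"
    unfolding clf_def using assms(1) by (intro Liminf_mono) auto
  finally show ?thesis .
qed

section \<open>The ratio \<open>f(\<theta>)/\<theta>\<close> and its running infimum\<close>

locale halfline_convex =
  fixes f :: "real \<Rightarrow> ereal"
  assumes conv: "econvex f"
    and nominf: "\<forall>\<theta>. f \<theta> \<noteq> -\<infinity>"
    and finpos: "\<exists>\<theta>>0. f \<theta> < \<infinity>"
    and infneg: "\<forall>\<theta><0. f \<theta> = \<infinity>"
begin

definition ratio :: "real \<Rightarrow> ereal" where
  "ratio \<theta> = f \<theta> / ereal \<theta>"

definition ratio_upto :: "real \<Rightarrow> ereal" where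
  "ratio_upto \<theta> = (INF s\<in>{0<..\<theta>}. ratio s)"

definition ratio_inf :: ereal where
  "ratio_inf = (INF s\<in>{0<..}. ratio s)"

definition ratio_record :: "real \<Rightarrow> bool" where
  "ratio_record \<theta> \<longleftrightarrow> 0 < \<theta> \<and> (\<forall>s. 0 < s \<and> s \<le> \<theta> \<longrightarrow> ratio \<theta> \<le> ratio s)"

definition minorant :: "real \<Rightarrow> ereal" where
  "minorant \<theta> = (if \<theta> \<le> 0 then f \<theta> else ereal \<theta> * ratio_upto \<theta>)"

lemma f_eq_mult_ratio: "0 < \<theta> \<Longrightarrow> f \<theta> = ereal \<theta> * ratio \<theta>"
  by (simp add: ratio_def ereal_mult_divide)

lemma ratio_eq_ereal_iff: "0 < \<theta> \<Longrightarrow> ratio \<theta> = ereal \<rho> \<longleftrightarrow> f \<theta> = ereal (\<theta> * \<rho>)"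
  using nominf by (cases "f \<theta>") (auto simp: ratio_def field_simps)

lemma ratio_neq_minf: "0 < \<theta> \<Longrightarrow> ratio \<theta> \<noteq> -\<infinity>"
  using nominf by (cases "f \<theta>") (auto simp: ratio_def)

lemma ratio_eq_infty_iff: "0 < \<theta> \<Longrightarrow> ratio \<theta> = \<infinity> \<longleftrightarrow> f \<theta> = \<infinity>"
  using nominf by (cases "f \<theta>") (auto simp: ratio_def)

lemma ratio_upto_le: "0 < s \<Longrightarrow> s \<le> \<theta> \<Longrightarrow> ratio_upto \<theta> \<le> ratio s"
  unfolding ratio_upto_def by (rule INF_lower) auto

lemma ratio_inf_le: "0 < s \<Longrightarrow> ratio_inf \<le> ratio s"
  unfolding ratio_inf_def by (rule INF_lower) auto

lemma ratio_inf_le_ratio_upto: "ratio_inf \<le> ratio_upto \<theta>"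
  unfolding ratio_upto_def ratio_inf_def by (rule INF_mono) auto

lemma ratio_upto_antimono: "\<theta>\<^sub>1 \<le> \<theta>\<^sub>2 \<Longrightarrow> ratio_upto \<theta>\<^sub>2 \<le> ratio_upto \<theta>\<^sub>1"
  unfolding ratio_upto_def by (rule INF_mono) auto

lemma ratio_increase_persists:
  assumes "0 < s" "s < \<theta>" "\<theta> < \<theta>'" "ratio s < ratio \<theta>"
  shows "ratio \<theta> \<le> ratio \<theta>'"
proof -
  have pos: "0 < \<theta>" "0 < \<theta>'"
    using assms by auto
  obtain a where a: "f s = ereal (s * a)" "ratio s = ereal a"
    using assms(1,4) ratio_neq_minf[OF assms(1)] ratio_eq_ereal_iff[OF assms(1)]
    by (cases "ratio s") auto
  show ?thesis
  proof (cases "f \<theta> = \<infinity>")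
    case True
    then have "f \<theta>' = \<infinity>"
      using econvex_finite_between[OF conv assms(2,3)] a(1) True by fastforce
    then show ?thesis
      using ratio_eq_infty_iff[OF pos(2)] by simp
  next
    case False
    then obtain b where b: "f \<theta> = ereal (\<theta> * b)" "ratio \<theta> = ereal b"
      using nominf ratio_eq_ereal_iff[OF pos(1)] pos(1)
      by (cases "f \<theta>") (auto intro: that[of "real_of_ereal (f \<theta>) / \<theta>"])
    have "a < b"
      using assms(4) a(2) b(2) by simp
    have "b \<le> (\<theta> * b - s * a) / (\<theta> - s)"
      using assms(1,2) \<open>a < b\<close> mult_strict_left_mono[OF \<open>a < b\<close> assms(1)]
      by (simp add: field_simps)
    then have "\<theta> * b + b * (\<theta>' - \<theta>) \<le> \<theta> * b + (\<theta> * b - s * a) / (\<theta> - s) * (\<theta>' - \<theta>)"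
      using assms(3) by (intro add_left_mono mult_right_mono) auto
    also have "ereal \<dots> \<le> f \<theta>'"
      using econvex_above_secant[OF conv nominf assms(2,3) a(1) b(1)] .
    finally have "ereal \<theta>' * ereal b \<le> ereal \<theta>' * ratio \<theta>'"
      using f_eq_mult_ratio[OF pos(2)] by (simp add: algebra_simps)
    then show ?thesis
      using b(2) pos(2) ereal_mult_le_mult_iff[of \<theta>' "ereal b"] by (simp del: times_ereal.simps)
  qed
qed

lemma ratio_record_downward_closed:
  assumes "ratio_record \<theta>'" "0 < \<theta>" "\<theta> \<le> \<theta>'"
  shows "ratio_record \<theta>"
proof (rule ccontr)
  assume "\<not> ratio_record \<theta>"
  then obtain s where s: "0 < s" "s < \<theta>" "ratio s < ratio \<theta>"
    using assms(2) unfolding ratio_record_def by (metis le_less not_le)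
  have "ratio \<theta> \<le> ratio \<theta>'"
    using ratio_increase_persists[OF s(1,2) _ s(3)] assms(3) by (cases "\<theta> = \<theta>'") auto
  moreover have "ratio \<theta>' \<le> ratio s"
    using assms(1,3) s unfolding ratio_record_def by auto
  ultimately show False
    using s(3) by simp
qed

lemma ratio_upto_eq_ratio_inf_if_not_record:
  assumes "0 < \<theta>" "\<not> ratio_record \<theta>"
  shows "ratio_upto \<theta> = ratio_inf"
proof (rule antisym[OF _ ratio_inf_le_ratio_upto])
  obtain s where s: "0 < s" "s < \<theta>" "ratio s < ratio \<theta>"
    using assms unfolding ratio_record_def by (metis le_less not_le)
  show "ratio_upto \<theta> \<le> ratio_inf"
    unfolding ratio_inf_def
  proof (rule INF_greatest)
    fix s' :: real
    assume "s' \<in> {0<..}"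
    show "ratio_upto \<theta> \<le> ratio s'"
    proof (cases "s' \<le> \<theta>")
      case False
      have "ratio_upto \<theta> \<le> ratio \<theta>"
        using ratio_upto_le assms(1) by simp
      also have "\<dots> \<le> ratio s'"
        using ratio_increase_persists[OF s(1,2) _ s(3)] False by simp
      finally show ?thesis .
    qed (use \<open>s' \<in> {0<..}\<close> ratio_upto_le in auto)
  qed
qed

lemma ratio_inf_minf_if_neg_at_0: "f 0 < 0 \<Longrightarrow> ratio_inf = -\<infinity>"
  using econvex_ratio_INF_minf[OF conv nominf] finpos unfolding ratio_inf_def ratio_def by blast

lemma Gam_fconj_eq_ratio_inf: "Gam (fconj f) = ratio_inf"
proof (rule antisym)
  show "Gam (fconj f) \<le> ratio_inf"
    unfolding ratio_inf_def
  proof (rule INF_greatest)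
    fix s :: real
    assume "s \<in> {0<..}"
    then have "0 < s" by simp
    show "Gam (fconj f) \<le> ratio s"
    proof (cases "f s")
      case (real c)
      have "Gam (fconj f) \<le> ereal (c / s) + ereal \<epsilon>" if "0 < \<epsilon>" for \<epsilon>
      proof -
        have "0 < ereal (s * (c / s + \<epsilon>)) - f s"
          using real \<open>0 < s\<close> that by (simp add: field_simps)
        also have "\<dots> \<le> fconj f (c / s + \<epsilon>)"
          unfolding fconj_def by (rule SUP_upper) simp
        finally show ?thesis
          unfolding Gam_def by (intro Inf_lower) auto
      qed
      then show ?thesis
        using real \<open>0 < s\<close> by (simp add: ratio_def ereal_le_epsilon2)
    qed (use \<open>0 < s\<close> nominf ratio_eq_infty_iff[of s] in auto)
  qed
  show "ratio_inf \<le> Gam (fconj f)"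
    unfolding Gam_def
  proof (rule Inf_greatest)
    fix y
    assume "y \<in> ereal ` {a. 0 < fconj f a}"
    then obtain a where y: "y = ereal a" and "0 < fconj f a"
      by auto
    then obtain \<theta> where \<theta>: "0 < ereal (\<theta> * a) - f \<theta>"
      unfolding fconj_def by (auto simp: less_SUP_iff)
    consider "\<theta> < 0" | "\<theta> = 0" | "0 < \<theta>"
      by linarith
    then show "ratio_inf \<le> y"
    proof cases
      case 2
      then have "f 0 < 0"
        using \<theta> nominf by (cases "f 0") auto
      then show ?thesis
        using ratio_inf_minf_if_neg_at_0 by simp
    next
      case 3
      obtain c where c: "f \<theta> = ereal c" "c < \<theta> * a"
        using \<theta> nominf by (cases "f \<theta>") auto
      then have "ratio \<theta> \<le> ereal a"
        using 3 by (simp add: ratio_def divide_le_eq mult.commute)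
      then show ?thesis
        using ratio_inf_le[OF 3] y by simp
    qed (use \<theta> infneg in auto)
  qed
qed

lemma mult_ratio_upto_le_f: "0 < \<theta> \<Longrightarrow> ereal \<theta> * ratio_upto \<theta> \<le> f \<theta>"
  using ratio_upto_le[of \<theta> \<theta>] f_eq_mult_ratio[of \<theta>] by (simp add: ereal_mult_left_mono)

lemma minorant_pos: "0 < \<theta> \<Longrightarrow> minorant \<theta> = ereal \<theta> * ratio_upto \<theta>"
  by (simp add: minorant_def)

lemma minorant_le_f: "minorant \<theta> \<le> f \<theta>"
  using mult_ratio_upto_le_f by (simp add: minorant_def)

lemma minorant_div: "0 < \<theta> \<Longrightarrow> minorant \<theta> / ereal \<theta> = ratio_upto \<theta>"
  by (cases "ratio_upto \<theta>") (simp_all add: minorant_pos)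

lemma nat_cand_le_minorant:
  assumes "g \<in> nat_cands f"
  shows "g \<theta> \<le> minorant \<theta>"
proof -
  have below: "\<And>\<theta>. g \<theta> \<le> f \<theta>"
    and antitone: "\<And>\<theta>\<^sub>1 \<theta>\<^sub>2. 0 < \<theta>\<^sub>1 \<Longrightarrow> \<theta>\<^sub>1 \<le> \<theta>\<^sub>2 \<Longrightarrow> g \<theta>\<^sub>2 / ereal \<theta>\<^sub>2 \<le> g \<theta>\<^sub>1 / ereal \<theta>\<^sub>1"
    using assms unfolding nat_cands_def by auto
  show ?thesis
  proof (cases "\<theta> \<le> 0")
    case False
    have "g \<theta> / ereal \<theta> \<le> ratio_upto \<theta>"
      unfolding ratio_upto_def
    proof (rule INF_greatest)
      fix s
      assume "s \<in> {0<..\<theta>}"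
      then have "g \<theta> / ereal \<theta> \<le> g s / ereal s"
        by (intro antitone) auto
      also have "\<dots> \<le> ratio s"
        using below \<open>s \<in> {0<..\<theta>}\<close> by (simp add: ratio_def)
      finally show "g \<theta> / ereal \<theta> \<le> ratio s" .
    qed
    then have "ereal \<theta> * (g \<theta> / ereal \<theta>) \<le> ereal \<theta> * ratio_upto \<theta>"
      using False by (intro ereal_mult_left_mono) auto
    then show ?thesis
      using False by (simp add: minorant_pos ereal_mult_divide)
  qed (use below in \<open>simp add: minorant_def\<close>)
qed

lemma nat_cands_empty_if_ratio_inf_minf:
  assumes "ratio_inf = -\<infinity>"
  shows "nat_cands f = {}"
proof (rule ccontr)
  assume "nat_cands f \<noteq> {}"
  then obtain g where g: "econvex g" "\<forall>\<theta>. g \<theta> \<noteq> -\<infinity>" "\<forall>\<theta>. g \<theta> \<le> f \<theta>"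
    "\<forall>\<theta>\<^sub>1 \<theta>\<^sub>2. 0 < \<theta>\<^sub>1 \<and> \<theta>\<^sub>1 \<le> \<theta>\<^sub>2 \<longrightarrow> g \<theta>\<^sub>2 / ereal \<theta>\<^sub>2 \<le> g \<theta>\<^sub>1 / ereal \<theta>\<^sub>1"
    unfolding nat_cands_def by auto
  obtain \<theta>\<^sub>1 where "0 < \<theta>\<^sub>1" "g \<theta>\<^sub>1 < \<infinity>"
    using finpos g(3) by (meson le_less_trans)
  then obtain K where "\<forall>\<theta>>0. ereal K \<le> g \<theta> / ereal \<theta>"
    using econvex_ratio_bounded_below[OF g(1,2) _ _ g(4)] by blast
  then have "ereal K \<le> ratio_inf"
    unfolding ratio_inf_def ratio_def using g(3)
    by (intro INF_greatest) (force intro: order_trans ereal_divide_right_mono)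
  then show False
    using assms by simp
qed

lemma fnat_eq_minf_if_ratio_inf_minf: "ratio_inf = -\<infinity> \<Longrightarrow> fnat f = (\<lambda>_. -\<infinity>)"
  using nat_cands_empty_if_ratio_inf_minf unfolding fnat_def by simp

lemma vtheta_minf_if_ratio_inf_minf: "ratio_inf = -\<infinity> \<Longrightarrow> vtheta f = -\<infinity>"
  using fnat_eq_minf_if_ratio_inf_minf nominf by (simp add: vtheta_def bot_ereal_def)

lemma mult_ratio_upto_le_chord_from_0:
  assumes "0 < s" "s \<le> y" "0 < t" "t < 1" "ratio s = ereal \<rho>" "f 0 = ereal c" "0 \<le> c"
  shows "ereal (t * y) * ratio_upto (t * y) \<le> ereal ((1 - t) * c + t * y * \<rho>)"
proof (cases "s \<le> t * y")
  case True
  have "ereal (t * y) * ratio_upto (t * y) \<le> ereal (t * y) * ereal \<rho>"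
    using ratio_upto_le[OF assms(1) True] assms(1,3,5) True by (intro ereal_mult_left_mono) auto
  then show ?thesis
    using assms(3,4,7) by (simp add: order_trans)
next
  case False
  define u where "u = t * y / s"
  have u: "0 < u" "u < 1" "u * s = t * y" "t \<le> u"
    using False assms(1-3) by (auto simp: u_def field_simps mult_left_mono)
  have "f ((1 - u) * 0 + u * s) \<le> ereal ((1 - u) * c + u * (s * \<rho>))"
    using econvex_real[OF conv u(1,2) assms(6)] assms(1,5) ratio_eq_ereal_iff by simp
  moreover have "(1 - u) * c \<le> (1 - t) * c"
    using u(4) assms(7) by (intro mult_right_mono) auto
  ultimately have "f (t * y) \<le> ereal ((1 - t) * c + t * y * \<rho>)"
    using u(3) by (simp add: mult.assoc[symmetric] order_trans)
  moreover have "0 < t * y"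
    using assms(1-3) by simp
  ultimately show ?thesis
    using mult_ratio_upto_le_f[of "t * y"] by (meson order_trans)
qed

lemma mult_ratio_upto_le_chord:
  assumes "0 < s\<^sub>1" "s\<^sub>1 \<le> x" "x < z" "z < y" "0 < s\<^sub>2" "s\<^sub>2 \<le> y"
    and z: "z = (1 - t) * x + t * y" and "0 < t" "t < 1"
    and a: "ratio s\<^sub>1 = ereal a" and b: "ratio s\<^sub>2 = ereal b"
  shows "ereal z * ratio_upto z \<le> ereal ((1 - t) * x * a + t * y * b)"
proof -
  have "0 < x" "0 < z"
    using assms(1-3) by auto
  have upto_a: "ratio_upto z \<le> ereal a"
    using ratio_upto_le[of s\<^sub>1 z] assms(1-3) a by simp
  have convex_comb: "z * c = (1 - t) * x * c + t * y * c" for c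
    unfolding z by (simp add: algebra_simps)
  consider "s\<^sub>2 \<le> z" | "z < s\<^sub>2" "a \<le> b" | "z < s\<^sub>2" "b < a"
    by linarith
  then show ?thesis
  proof cases
    case 1
    have "ratio_upto z \<le> ereal (min a b)"
      using upto_a ratio_upto_le[OF assms(5) 1] b by (simp add: min_def)
    then have "ereal z * ratio_upto z \<le> ereal z * ereal (min a b)"
      using \<open>0 < z\<close> by (intro ereal_mult_left_mono) auto
    also have "\<dots> = ereal (z * min a b)"
      by (rule times_ereal.simps(1))
    also have "z * min a b \<le> (1 - t) * x * a + t * y * b"
      unfolding convex_comb using \<open>0 < x\<close> assms(3,4,8,9)
      by (intro add_mono mult_left_mono) auto
    finally show ?thesis by simp
  next
    case 2
    have "ereal z * ratio_upto z \<le> ereal z * ereal a"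
      using upto_a \<open>0 < z\<close> by (intro ereal_mult_left_mono) auto
    also have "\<dots> = ereal (z * a)"
      by simp
    also have "z * a \<le> (1 - t) * x * a + t * y * b"
      unfolding convex_comb using 2 \<open>0 < x\<close> assms(3,4,8) by (simp add: mult_left_mono)
    finally show ?thesis by simp
  next
    case 3
    define u where "u = (z - s\<^sub>1) / (s\<^sub>2 - s\<^sub>1)"
    have "s\<^sub>1 < z"
      using assms(2,3) by simp
    note u = between_convex_combination[OF this 3(1), folded u_def]
    have "f z \<le> ereal ((1 - u) * (s\<^sub>1 * a) + u * (s\<^sub>2 * b))"
      using econvex_real[OF conv u(1,2)] u(3) a b assms(1,5) ratio_eq_ereal_iff by force
    also have "(1 - u) * (s\<^sub>1 * a) + u * (s\<^sub>2 * b) = ((1 - u) * s\<^sub>1) * a + (u * s\<^sub>2) * b"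
      by (simp add: ac_simps)
    also have "\<dots> = z * a - u * s\<^sub>2 * (a - b)"
    proof -
      have e: "(1 - u) * s\<^sub>1 = z - u * s\<^sub>2"
        using u(3) by linarith
      show ?thesis
        unfolding e by (simp add: algebra_simps)
    qed
    also have "\<dots> \<le> z * a - t * y * (a - b)"
    proof -
      have "t * (y - x) = z - x"
        using z by (simp add: algebra_simps)
      then have "t = (z - x) / (y - x)"
        using assms(3,4) by (simp add: field_simps)
      then have "t * y \<le> u * s\<^sub>2"
        using interpolation_weight_mono[OF assms(1,2,3) 3(1) assms(6)] by (simp add: u_def)
      then show ?thesis
        using 3 by (simp add: mult_right_mono)
    qed
    also have "\<dots> = (1 - t) * x * a + t * y * b"
      unfolding convex_comb by (simp add: algebra_simps)
    finally show ?thesis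
      using mult_ratio_upto_le_f[OF \<open>0 < z\<close>] by (simp add: order_trans)
  qed
qed

end

section \<open>The natural minorant when \<open>\<Gamma> > -\<infinity>\<close>\<close>

locale halfline_convex_ratio_bounded = halfline_convex +
  assumes ratio_inf_neq_minf: "ratio_inf \<noteq> -\<infinity>"
begin

lemma ratio_inf_finite: obtains \<Gamma> where "ratio_inf = ereal \<Gamma>"
proof -
  obtain \<theta> where "0 < \<theta>" "f \<theta> < \<infinity>"
    using finpos by blast
  then have "ratio_inf < \<infinity>"
    using ratio_inf_le[of \<theta>] ratio_eq_infty_iff[of \<theta>] by (auto simp: less_top)
  then show ?thesis
    using ratio_inf_neq_minf that by (cases ratio_inf) auto
qed

lemma f_0_nonneg: "0 \<le> f 0"
  using ratio_inf_minf_if_neg_at_0 ratio_inf_neq_minf by force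

lemma minorant_neq_minf: "minorant \<theta> \<noteq> -\<infinity>"
  using nominf ratio_inf_le_ratio_upto[of \<theta>] ratio_inf_neq_minf
  by (cases "ratio_upto \<theta>") (auto simp: minorant_def)

lemma minorant_convex_ineq:
  assumes "x < y" "0 < t" "t < 1"
  shows "minorant ((1 - t) * x + t * y) \<le> ereal (1 - t) * minorant x + ereal t * minorant y"
proof -
  define z where "z = (1 - t) * x + t * y"
  have "z - x = t * (y - x)" "y - z = (1 - t) * (y - x)"
    by (simp_all add: z_def algebra_simps)
  then have "x < z" "z < y"
    using assms by (metis diff_gt_0_iff_gt mult_pos_pos)+
  show ?thesis
  proof (cases "minorant x = \<infinity> \<or> minorant y = \<infinity>")
    case True
    then have rhs: "ereal (1 - t) * minorant x + ereal t * minorant y = \<infinity>"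
      using minorant_neq_minf[of x] minorant_neq_minf[of y] assms(2,3)
      by (cases "minorant x"; cases "minorant y") auto
    show ?thesis
      unfolding rhs by simp
  next
    case False
    then have "0 \<le> x"
      using infneg by (force simp: minorant_def)
    have "0 < y" "0 < z"
      using \<open>0 \<le> x\<close> \<open>x < z\<close> \<open>z < y\<close> by auto
    obtain M\<^sub>y where M\<^sub>y: "ratio_upto y = ereal M\<^sub>y"
      using False minorant_neq_minf[of y] \<open>0 < y\<close>
      by (cases "ratio_upto y") (auto simp: minorant_pos)
    show ?thesis
    proof (cases "x = 0")
      case True
      obtain c where c: "f 0 = ereal c"
        using False nominf True by (cases "f 0") (auto simp: minorant_def)
      have "ereal z * ratio_upto z \<le> ereal ((1 - t) * c + t * y * M\<^sub>y)"
        using M\<^sub>y[unfolded ratio_upto_def]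
      proof (rule ereal_le_affine_of_INF)
        show "ereal z * ratio_upto z \<le> ereal ((1 - t) * c + t * y * \<rho>)"
          if "s \<in> {0<..y}" "ratio s = ereal \<rho>" for s \<rho>
          using mult_ratio_upto_le_chord_from_0[OF _ _ assms(2,3) that(2) c] that(1)
            f_0_nonneg c True by (simp add: z_def)
      qed (use assms(2) \<open>0 < y\<close> in simp)
      moreover have "ereal (1 - t) * minorant x + ereal t * minorant y = ereal ((1 - t) * c + t * y * M\<^sub>y)"
        using True c M\<^sub>y \<open>0 < y\<close> by (simp add: minorant_def)
      ultimately show ?thesis
        unfolding z_def[symmetric] minorant_pos[OF \<open>0 < z\<close>] by simp
    next
      case False
      then have "0 < x"
        using \<open>0 \<le> x\<close> by simp
      obtain M\<^sub>x where M\<^sub>x: "ratio_upto x = ereal M\<^sub>x"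
        using \<open>\<not> (minorant x = \<infinity> \<or> minorant y = \<infinity>)\<close> minorant_neq_minf[of x] \<open>0 < x\<close>
        by (cases "ratio_upto x") (auto simp: minorant_pos)
      have "ereal z * ratio_upto z \<le> ereal ((1 - t) * x * M\<^sub>x + t * y * M\<^sub>y)"
        using M\<^sub>y[unfolded ratio_upto_def]
      proof (rule ereal_le_affine_of_INF)
        fix s\<^sub>2 b
        assume s\<^sub>2: "s\<^sub>2 \<in> {0<..y}" "ratio s\<^sub>2 = ereal b"
        have "ereal z * ratio_upto z \<le> ereal (t * y * b + (1 - t) * x * M\<^sub>x)"
          using M\<^sub>x[unfolded ratio_upto_def]
        proof (rule ereal_le_affine_of_INF)
          show "ereal z * ratio_upto z \<le> ereal (t * y * b + (1 - t) * x * a)"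
            if "s\<^sub>1 \<in> {0<..x}" "ratio s\<^sub>1 = ereal a" for s\<^sub>1 a
            using mult_ratio_upto_le_chord[OF _ _ \<open>x < z\<close> \<open>z < y\<close> _ _ z_def assms(2,3) that(2) s\<^sub>2(2)]
              that(1) s\<^sub>2(1) by (simp add: add.commute)
        qed (use assms(3) \<open>0 < x\<close> in simp)
        then show "ereal z * ratio_upto z \<le> ereal ((1 - t) * x * M\<^sub>x + t * y * b)"
          by (simp add: add.commute)
      qed (use assms(2) \<open>0 < y\<close> in simp)
      moreover have "ereal (1 - t) * minorant x + ereal t * minorant y = ereal ((1 - t) * x * M\<^sub>x + t * y * M\<^sub>y)"
        using M\<^sub>x M\<^sub>y \<open>0 < x\<close> \<open>0 < y\<close> by (simp add: minorant_pos mult.assoc)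
      ultimately show ?thesis
        unfolding z_def[symmetric] minorant_pos[OF \<open>0 < z\<close>] by simp
    qed
  qed
qed

lemma minorant_econvex: "econvex minorant"
  unfolding econvex_def
proof (intro allI impI)
  fix x y t :: real
  assume t: "0 < t \<and> t < 1"
  consider "x < y" | "x = y" | "y < x"
    by linarith
  then show "minorant ((1 - t) * x + t * y) \<le> ereal (1 - t) * minorant x + ereal t * minorant y"
  proof cases
    case 1
    then show ?thesis
      using minorant_convex_ineq t by blast
  next
    case 2
    then show ?thesis
      using minorant_neq_minf[of x] t
      by (cases "minorant x") (auto simp: algebra_simps)
  next
    case 3
    have "minorant ((1 - (1 - t)) * y + (1 - t) * x)
        \<le> ereal (1 - (1 - t)) * minorant y + ereal (1 - t) * minorant x"
      using minorant_convex_ineq[OF 3, of "1 - t"] t by simp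
    then show ?thesis
      by (simp add: add.commute)
  qed
qed

lemma minorant_in_nat_cands: "minorant \<in> nat_cands f"
  unfolding nat_cands_def
  using minorant_econvex minorant_neq_minf minorant_le_f minorant_div ratio_upto_antimono by auto

lemma fnat_eq_minorant: "fnat f = minorant"
  using fnat_eq_greatest[OF minorant_in_nat_cands] nat_cand_le_minorant by (auto simp: le_fun_def)

lemma mult_ratio_inf_le_f: "ereal \<theta> * ratio_inf \<le> f \<theta>"
proof -
  consider "\<theta> < 0" | "\<theta> = 0" | "0 < \<theta>"
    by linarith
  then show ?thesis
  proof cases
    case 3
    then have "ereal \<theta> * ratio_inf \<le> ereal \<theta> * ratio \<theta>"
      using ratio_inf_le by (intro ereal_mult_left_mono) auto
    then show ?thesis
      using f_eq_mult_ratio[OF 3] by simp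
  qed (use infneg f_0_nonneg in \<open>auto simp: zero_ereal_def[symmetric]\<close>)
qed

lemma fnat_eq_f_iff: "fnat f \<theta> = f \<theta> \<longleftrightarrow> \<theta> \<le> 0 \<or> ratio_record \<theta>"
proof (cases "\<theta> \<le> 0")
  case False
  then have "0 < \<theta>" by simp
  have "fnat f \<theta> = f \<theta> \<longleftrightarrow> ratio_upto \<theta> = ratio \<theta>"
    using f_eq_mult_ratio[OF \<open>0 < \<theta>\<close>] minorant_pos[OF \<open>0 < \<theta>\<close>] \<open>0 < \<theta>\<close>
    by (simp add: fnat_eq_minorant ereal_mult_cancel_left)
  also have "\<dots> \<longleftrightarrow> ratio \<theta> \<le> ratio_upto \<theta>"
    using ratio_upto_le[OF \<open>0 < \<theta>\<close> order_refl] by auto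
  also have "\<dots> \<longleftrightarrow> ratio_record \<theta>"
    using \<open>0 < \<theta>\<close> by (auto simp: ratio_record_def ratio_upto_def le_INF_iff)
  finally show ?thesis
    using False by simp
qed (simp add: fnat_eq_minorant minorant_def)

lemma vtheta_nonneg: "0 \<le> vtheta f"
proof -
  have "ereal 0 \<le> vtheta f"
    unfolding vtheta_def using fnat_eq_f_iff[of 0] by (intro Sup_upper) auto
  then show ?thesis
    by (simp add: zero_ereal_def)
qed

lemma ratio_record_below_vtheta:
  assumes "0 < \<theta>" "ereal \<theta> < vtheta f"
  shows "ratio_record \<theta>"
proof -
  obtain \<theta>' where "f \<theta>' = fnat f \<theta>'" "\<theta> < \<theta>'"
    using assms(2) unfolding vtheta_def by (auto simp: less_Sup_iff)
  then have "ratio_record \<theta>'"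
    using fnat_eq_f_iff[of \<theta>'] assms(1) by auto
  then show ?thesis
    using ratio_record_downward_closed[OF _ assms(1)] \<open>\<theta> < \<theta>'\<close> by simp
qed

lemma not_ratio_record_above_vtheta:
  assumes "vtheta f < ereal \<theta>"
  shows "0 < \<theta>" "\<not> ratio_record \<theta>"
proof -
  show "0 < \<theta>"
    using vtheta_nonneg assms by (metis ereal_less(2) order.strict_trans1 zero_ereal_def)
  show "\<not> ratio_record \<theta>"
  proof
    assume "ratio_record \<theta>"
    then have "ereal \<theta> \<le> vtheta f"
      unfolding vtheta_def using fnat_eq_f_iff[of \<theta>] by (intro Sup_upper) auto
    then show False
      using assms by simp
  qed
qed

lemma fnat_eq_f_below_vtheta:
  assumes "0 \<le> \<theta>" "ereal \<theta> < vtheta f"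
  shows "fnat f \<theta> = f \<theta>"
  using fnat_eq_f_iff[of \<theta>] ratio_record_below_vtheta[OF _ assms(2)] assms(1) by fastforce

lemma fnat_above_vtheta:
  assumes "vtheta f < ereal \<theta>"
  shows "fnat f \<theta> = ereal \<theta> * ratio_inf" "ereal \<theta> * ratio_inf < f \<theta>"
proof -
  note \<theta> = not_ratio_record_above_vtheta[OF assms]
  show "fnat f \<theta> = ereal \<theta> * ratio_inf"
    using ratio_upto_eq_ratio_inf_if_not_record[OF \<theta>] minorant_pos[OF \<theta>(1)]
      fnat_eq_minorant by simp
  moreover have "fnat f \<theta> \<noteq> f \<theta>"
    using fnat_eq_f_iff[of \<theta>] \<theta> by simp
  moreover have "fnat f \<theta> \<le> f \<theta>"
    using minorant_le_f[of \<theta>] fnat_eq_minorant by simp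
  ultimately show "ereal \<theta> * ratio_inf < f \<theta>"
    by simp
qed

lemma ratio_tendsto_ratio_inf_if_vtheta_infty:
  assumes "vtheta f = \<infinity>"
  shows "(ratio \<longlongrightarrow> ratio_inf) at_top"
proof (rule order_tendstoI)
  fix a
  assume "a < ratio_inf"
  then show "\<forall>\<^sub>F \<theta> in at_top. a < ratio \<theta>"
    unfolding eventually_at_top_linorder using ratio_inf_le
    by (intro exI[of _ 1]) (auto intro: less_le_trans)
next
  fix a
  assume "ratio_inf < a"
  then obtain s where s: "0 < s" "ratio s < a"
    unfolding ratio_inf_def INF_less_iff by auto
  have "ratio \<theta> < a" if "s \<le> \<theta>" for \<theta>
  proof -
    have "ratio_record \<theta>"
      using ratio_record_below_vtheta[of \<theta>] assms s(1) that by simp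
    then show ?thesis
      using s that unfolding ratio_record_def by (auto intro: le_less_trans)
  qed
  then show "\<forall>\<^sub>F \<theta> in at_top. ratio \<theta> < a"
    unfolding eventually_at_top_linorder by blast
qed

subsection \<open>Behaviour at \<open>\<vartheta>\<close>\<close>

lemma frequently_ratio_less_at_right_vtheta:
  assumes v: "vtheta f = ereal v" and "ratio_inf < ratio_upto v" "ratio_inf < ereal c"
  shows "\<exists>\<^sub>F s in at_right v. ratio s < ereal c"
  unfolding frequently_def eventually_at_right_field
proof clarify
  fix b
  assume "v < b" and no_less: "\<forall>s>v. s < b \<longrightarrow> \<not> ratio s < ereal c"
  define \<theta> where "\<theta> = (v + b) / 2"
  have "vtheta f < ereal \<theta>"
    using v \<open>v < b\<close> by (simp add: \<theta>_def)
  then have "ratio_upto \<theta> = ratio_inf"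
    using not_ratio_record_above_vtheta ratio_upto_eq_ratio_inf_if_not_record by blast
  then have "ratio_upto \<theta> < min (ereal c) (ratio_upto v)"
    using assms(2,3) by simp
  then obtain s where s: "0 < s" "s \<le> \<theta>" "ratio s < min (ereal c) (ratio_upto v)"
    unfolding ratio_upto_def INF_less_iff by auto
  have "v < s"
    using ratio_upto_le[OF s(1), of v] s(3) by (meson leI min.strict_boundedE not_less)
  then show False
    using no_less s \<open>v < b\<close> by (auto simp: \<theta>_def)
qed

lemma frequently_ratio_less_at_vtheta:
  assumes v: "vtheta f = ereal v" and "f v \<noteq> ereal v * ratio_inf" "ratio_inf < ereal c"
  shows "\<exists>\<^sub>F s in at v. 0 < s \<and> ratio s < ereal c"
proof (cases "ratio_inf < ratio_upto v")
  case True
  have "0 \<le> v"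
    using vtheta_nonneg v by (simp add: zero_ereal_def)
  then have "\<forall>\<^sub>F s in at_right v. 0 < s"
    using eventually_at_right_less[of v] by (auto elim: eventually_mono)
  then have "\<exists>\<^sub>F s in at_right v. 0 < s \<and> ratio s < ereal c"
    using frequently_ratio_less_at_right_vtheta[OF v True assms(3)]
    by (auto intro: frequently_eventually_conj)
  then show ?thesis
    by (simp add: frequently_at_iff_at_left_or_at_right)
next
  case False
  then have upto: "ratio_upto v = ratio_inf"
    using ratio_inf_le_ratio_upto[of v] by simp
  have "0 < v"
  proof (rule ccontr)
    assume "\<not> 0 < v"
    then have "ratio_upto v = \<infinity>"
      by (simp add: ratio_upto_def top_ereal_def)
    then show False
      using upto ratio_inf_finite by auto
  qed
  have "ratio v \<noteq> ratio_inf"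
    using assms(2) f_eq_mult_ratio[OF \<open>0 < v\<close>] by auto
  then have "ratio_upto v < min (ereal c) (ratio v)"
    using upto ratio_inf_le[OF \<open>0 < v\<close>] assms(3) by simp
  then obtain s\<^sub>0 where s\<^sub>0: "0 < s\<^sub>0" "s\<^sub>0 \<le> v" "ratio s\<^sub>0 < min (ereal c) (ratio v)"
    unfolding ratio_upto_def INF_less_iff by auto
  have "\<forall>\<^sub>F s in at_left v. 0 < s \<and> ratio s < ereal c"
    unfolding eventually_at_left_field
  proof (intro exI[of _ s\<^sub>0] conjI allI impI)
    show "s\<^sub>0 < v"
      using s\<^sub>0 by (cases "s\<^sub>0 = v") auto
    fix s
    assume s: "s\<^sub>0 < s" "s < v"
    then show "0 < s"
      using s\<^sub>0(1) by simp
    have "ratio_record s"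
      using ratio_record_below_vtheta[of s] s s\<^sub>0(1) v by simp
    then have "ratio s \<le> ratio s\<^sub>0"
      using s s\<^sub>0(1) unfolding ratio_record_def by simp
    then show "ratio s < ereal c"
      using s\<^sub>0(3) by (auto intro: le_less_trans)
  qed
  then show ?thesis
    by (simp add: frequently_at_iff_at_left_or_at_right eventually_frequently)
qed

lemma Liminf_at_vtheta_le:
  assumes v: "vtheta f = ereal v" and "f v \<noteq> ereal v * ratio_inf"
  shows "Liminf (at v) f \<le> ereal v * ratio_inf"
proof -
  obtain \<Gamma> where \<Gamma>: "ratio_inf = ereal \<Gamma>"
    by (rule ratio_inf_finite)
  have "0 \<le> v"
    using vtheta_nonneg v by (simp add: zero_ereal_def)
  have "Liminf (at v) f \<le> ereal (v * \<Gamma>) + ereal \<epsilon>" if "0 < \<epsilon>" for \<epsilon>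
  proof -
    define c where "c = \<Gamma> + \<epsilon> / (v + 1)"
    have "\<exists>\<^sub>F s in at v. f s \<le> ereal (s * c)"
    proof (rule frequently_elim1)
      show "\<exists>\<^sub>F s in at v. 0 < s \<and> ratio s < ereal c"
        using frequently_ratio_less_at_vtheta[OF v assms(2)] \<Gamma> that \<open>0 \<le> v\<close> by (simp add: c_def)
    next
      fix s
      assume s: "0 < s \<and> ratio s < ereal c"
      then have "ereal s * ratio s \<le> ereal s * ereal c"
        by (intro ereal_mult_left_mono) auto
      then show "f s \<le> ereal (s * c)"
        using f_eq_mult_ratio[of s] s by simp
    qed
    then have "Liminf (at v) f \<le> ereal (v * c)"
      by (rule Liminf_le_lim_frequently) (auto intro!: tendsto_intros)
    also have "v * c \<le> v * \<Gamma> + \<epsilon>"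
      using \<open>0 \<le> v\<close> that by (simp add: c_def distrib_left field_simps)
    finally show ?thesis by simp
  qed
  then show ?thesis
    using \<Gamma> by (simp add: ereal_le_epsilon2)
qed

lemma clf_at_vtheta:
  assumes v: "vtheta f = ereal v"
  shows "clf f v = ereal v * ratio_inf"
proof (rule antisym)
  show "clf f v \<le> ereal v * ratio_inf"
    using clf_le[of f v] clf_le_Liminf_at[of f v] Liminf_at_vtheta_le[OF v]
    by (cases "f v = ereal v * ratio_inf") (auto intro: order_trans)
  obtain \<Gamma> where \<Gamma>: "ratio_inf = ereal \<Gamma>"
    by (rule ratio_inf_finite)
  have "ereal (v * \<Gamma>) \<le> clf f v"
    using mult_ratio_inf_le_f \<Gamma>
    by (intro clf_ge_continuous_minorant[of "\<lambda>y. ereal (y * \<Gamma>)"]) (auto intro!: tendsto_intros filterlim_ident)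
  then show "ereal v * ratio_inf \<le> clf f v"
    using \<Gamma> by simp
qed

lemma ratio_at_vtheta_if_lsc:
  assumes v: "vtheta f = ereal v" and "0 < v" "lsc_at f v"
  shows "ratio v = ratio_inf"
proof -
  have "f v = ereal v * ratio_inf"
  proof (rule ccontr)
    assume "f v \<noteq> ereal v * ratio_inf"
    then have "f v \<le> ereal v * ratio_inf"
      using Liminf_at_vtheta_le[OF v] assms(3) unfolding lsc_at_def by (blast intro: order_trans)
    then show False
      using mult_ratio_inf_le_f[of v] \<open>f v \<noteq> ereal v * ratio_inf\<close> by simp
  qed
  then show ?thesis
    using f_eq_mult_ratio[OF \<open>0 < v\<close>] \<open>0 < v\<close> by (simp add: ereal_mult_cancel_left)
qed

lemma minorant_at_vtheta_above_dom:
  assumes v: "vtheta f = ereal v" and "Inf (ereal ` dom_f f) < ereal v"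
  shows "minorant v = ereal v * ratio_inf"
proof -
  obtain p where "p \<in> dom_f f" "p < v"
    using assms(2) by (auto simp: Inf_less_iff)
  then obtain a where a: "f p = ereal a"
    using nominf unfolding dom_f_def by (cases "f p") auto
  then have "0 \<le> p"
    using infneg by (cases "p < 0") auto
  have "0 < v"
    using \<open>0 \<le> p\<close> \<open>p < v\<close> by simp
  have "ratio_upto v = ratio_inf"
  proof (rule ccontr)
    assume "ratio_upto v \<noteq> ratio_inf"
    then have "ratio_inf < ratio_upto v"
      using ratio_inf_le_ratio_upto[of v] by simp
    then obtain c where c: "ratio_inf < ereal c" "ereal c < ratio_upto v"
      using ereal_dense2 by blast
    have "\<exists>\<^sub>F s in at_right v. f s \<le> ereal (s * c)"
      using frequently_eventually_conj[OF frequently_ratio_less_at_right_vtheta[OF v \<open>ratio_inf < ratio_upto v\<close> c(1)]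
          eventually_at_right_less[of v]]
    proof (rule frequently_elim1)
      fix s
      assume s: "v < s \<and> ratio s < ereal c"
      then have "ereal s * ratio s \<le> ereal s * ereal c"
        using \<open>0 < v\<close> by (intro ereal_mult_left_mono) auto
      then show "f s \<le> ereal (s * c)"
        using f_eq_mult_ratio[of s] s \<open>0 < v\<close> by simp
    qed
    then have "f v \<le> ereal (v * c)"
      by (rule econvex_le_of_frequently_at_right[OF conv \<open>p < v\<close> a, rotated])
        (auto intro!: tendsto_intros)
    moreover have "ereal v * ereal c < ereal v * ratio_upto v"
      using c(2) \<open>0 < v\<close> by (intro ereal_mult_strict_left_mono) auto
    ultimately show False
      using mult_ratio_upto_le_f[OF \<open>0 < v\<close>] by simp
  qed
  then show ?thesis
    using minorant_pos[OF \<open>0 < v\<close>] by simp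
qed

lemma fnat_eq_f_at_vtheta_eq_dom_inf:
  assumes "Inf (ereal ` dom_f f) = ereal v"
  shows "fnat f v = f v"
proof -
  have "ratio_record v" if "0 < v"
    unfolding ratio_record_def
  proof (intro conjI allI impI that)
    fix s
    assume s: "0 < s \<and> s \<le> v"
    show "ratio v \<le> ratio s"
    proof (cases "s = v")
      case False
      then have "s \<notin> dom_f f"
        using s assms by (metis Inf_lower image_eqI ereal_less_eq(3) not_le order.not_eq_order_implies_strict)
      then show ?thesis
        using s ratio_eq_infty_iff[of s] by (simp add: dom_f_def)
    qed simp
  qed
  then show ?thesis
    using fnat_eq_f_iff[of v] by fastforce
qed

end

context halfline_convex
begin

lemma INF_fnat_ratio: "(INF \<theta>\<in>{0<..}. fnat f \<theta> / ereal \<theta>) = ratio_inf"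
proof (cases "ratio_inf = -\<infinity>")
  case True
  then have "(INF \<theta>\<in>{0<..}. fnat f \<theta> / ereal \<theta>) \<le> -\<infinity>"
    using fnat_eq_minf_if_ratio_inf_minf INF_lower[of 1 "{0<..}" "\<lambda>\<theta>. fnat f \<theta> / ereal \<theta>"] by simp
  then show ?thesis
    using True by simp
next
  case False
  interpret halfline_convex_ratio_bounded f
    using False by unfold_locales
  have "(INF \<theta>\<in>{0<..}. fnat f \<theta> / ereal \<theta>) = (INF \<theta>\<in>{0<..}. ratio_upto \<theta>)"
    using fnat_eq_minorant minorant_div by (intro INF_cong) auto
  also have "\<dots> = ratio_inf"
  proof (rule antisym)
    show "(INF \<theta>\<in>{0<..}. ratio_upto \<theta>) \<le> ratio_inf"
      unfolding ratio_inf_def using ratio_upto_le by (intro INF_mono) auto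
  qed (intro INF_greatest ratio_inf_le_ratio_upto)
  finally show ?thesis .
qed

end

theorem proposition9:
  fixes f :: "real \<Rightarrow> ereal"
  assumes conv: "econvex f"
    and nominf: "\<forall>\<theta>. f \<theta> \<noteq> -\<infinity>"
    and finpos: "\<exists>\<theta>>0. f \<theta> < \<infinity>"
    and infneg: "\<forall>\<theta><0. f \<theta> = \<infinity>"
  defines "\<Gamma> \<equiv> Gam (fconj f)"
    and "\<theta>v \<equiv> vtheta f"
    and "\<psi> \<equiv> Inf (ereal ` dom_f f)"
  shows
    "(\<Gamma> = -\<infinity> \<longrightarrow> fnat f = (\<lambda>_. -\<infinity>) \<and> \<theta>v = -\<infinity>)
   \<and> (\<Gamma> \<noteq> -\<infinity> \<longrightarrow> \<theta>v \<ge> 0 \<and> (\<forall>\<theta>. 0 \<le> \<theta> \<and> ereal \<theta> < \<theta>v \<longrightarrow> fnat f \<theta> = f \<theta>))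
   \<and> (0 \<le> \<theta>v \<and> \<theta>v < \<infinity> \<longrightarrow>
        (\<forall>\<theta>. ereal \<theta> > \<theta>v \<longrightarrow> fnat f \<theta> = ereal \<theta> * \<Gamma> \<and> ereal \<theta> * \<Gamma> < f \<theta>)
      \<and> (\<theta>v = \<psi> \<longrightarrow> fnat f (real_of_ereal \<theta>v) = f (real_of_ereal \<theta>v)
            \<and> f (real_of_ereal \<theta>v) \<ge> clf f (real_of_ereal \<theta>v)
            \<and> clf f (real_of_ereal \<theta>v) = \<theta>v * \<Gamma>)
      \<and> (\<theta>v > \<psi> \<longrightarrow> fnat f (real_of_ereal \<theta>v) = \<theta>v * \<Gamma>
            \<and> \<theta>v * \<Gamma> = clf f (real_of_ereal \<theta>v)
            \<and> clf f (real_of_ereal \<theta>v) \<le> f (real_of_ereal \<theta>v)))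
   \<and> \<Gamma> = (INF \<theta>\<in>{0<..}. fnat f \<theta> / ereal \<theta>)
   \<and> \<Gamma> = (INF \<theta>\<in>{0<..}. f \<theta> / ereal \<theta>)
   \<and> (0 < \<theta>v \<and> \<theta>v < \<infinity> \<and> lsc_at f (real_of_ereal \<theta>v) \<longrightarrow>
        \<Gamma> = f (real_of_ereal \<theta>v) / \<theta>v)
   \<and> (\<theta>v = \<infinity> \<longrightarrow> ((\<lambda>\<theta>. f \<theta> / ereal \<theta>) \<longlongrightarrow> \<Gamma>) at_top)"
proof -
  interpret halfline_convex f
    using assms(1-4) by unfold_locales
  have \<Gamma>: "\<Gamma> = ratio_inf" and INF_f: "(INF \<theta>\<in>{0<..}. f \<theta> / ereal \<theta>) = ratio_inf"
    by (simp_all add: \<Gamma>_def Gam_fconj_eq_ratio_inf ratio_inf_def ratio_def)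
  show ?thesis
  proof (cases "ratio_inf = -\<infinity>")
    case True
    then show ?thesis
      using \<Gamma> INF_f INF_fnat_ratio fnat_eq_minf_if_ratio_inf_minf vtheta_minf_if_ratio_inf_minf
      by (simp add: \<theta>v_def)
  next
    case False
    interpret halfline_convex_ratio_bounded f
      using False by unfold_locales
    show ?thesis
    proof (cases \<theta>v)
      case (real v)
      then have v: "vtheta f = ereal v"
        by (simp add: \<theta>v_def)
      show ?thesis
        unfolding real
        using False \<Gamma> INF_f INF_fnat_ratio vtheta_nonneg fnat_eq_f_below_vtheta fnat_above_vtheta
          fnat_eq_f_at_vtheta_eq_dom_inf[of v, folded \<psi>_def] minorant_at_vtheta_above_dom[OF v, folded \<psi>_def]
          fnat_eq_minorant clf_at_vtheta[OF v] clf_le[of f v] ratio_at_vtheta_if_lsc[OF v]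
        by (auto simp: v ratio_def)
    next
      case PInf
      then show ?thesis
        using False \<Gamma> INF_f INF_fnat_ratio fnat_eq_f_below_vtheta ratio_tendsto_ratio_inf_if_vtheta_infty
        by (simp add: \<theta>v_def ratio_def[abs_def])
    qed (use vtheta_nonneg in \<open>simp add: \<theta>v_def\<close>)
  qed
qed

end
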